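(* Let $\mathcal{X}=(X,dX)$ be a directed space. On the set of traces of $\mathcal{X}$, define $f\leq g$ if and only if there exist traces $u,v$ with $g=u\star f\star v$. Then $\leq$ is a preorder. If moreover $\mathcal{X}$ is a pospace (with its increasing paths as dipaths), then $\leq$ is a partial order.
   Context: A directed space $\mathcal{X}=(X,dX)$ is a topological space $X$ with a set $dX$ of continuous paths $[0,1]\to X$ (dipaths) containing constant paths, closed under monotone reparametrization and under concatenation. A trace is the equivalence class of a dipath modulo monotone reparametrization, and concatenation $\star$ of (composable) traces is induced by concatenation of dipaths. A pospace is a Hausdorff space $X$ with a partial order $\leq_X$ that is closed in $X\times X$; it is regarded as a directed space whose dipaths are the continuous order-preserving maps $[0,1]\to X$ ($[0,1]$ with its usual order). *)

theory Defs
  imports "HOL-Analysis.Analysis"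
begin

text \<open>Paths are functions real => 'a; only their values on [0,1] are relevant.\<close>

definition dpath_cat :: "(real \<Rightarrow> 'a) \<Rightarrow> (real \<Rightarrow> 'a) \<Rightarrow> real \<Rightarrow> 'a" where
  "dpath_cat p q = (\<lambda>t. if t \<le> 1/2 then p (2 * t) else q (2 * t - 1))"

definition mono_reparam :: "(real \<Rightarrow> real) \<Rightarrow> bool" where
  "mono_reparam \<phi> \<longleftrightarrow> continuous_on {0..1} \<phi> \<and> \<phi> ` {0..1} \<subseteq> {0..1} \<and> mono_on {0..1} \<phi>"

definition is_path :: "'a topology \<Rightarrow> (real \<Rightarrow> 'a) \<Rightarrow> bool" where
  "is_path X p \<longleftrightarrow> continuous_map (top_of_set {0..1}) X p"

definition dspace :: "'a topology \<Rightarrow> (real \<Rightarrow> 'a) set \<Rightarrow> bool" where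
  "dspace X dX \<longleftrightarrow>
     (\<forall>p\<in>dX. is_path X p) \<and>
     (\<forall>x\<in>topspace X. (\<lambda>t. x) \<in> dX) \<and>
     (\<forall>p\<in>dX. \<forall>\<phi>. mono_reparam \<phi> \<longrightarrow> p \<circ> \<phi> \<in> dX) \<and>
     (\<forall>p\<in>dX. \<forall>q\<in>dX. p 1 = q 0 \<longrightarrow> dpath_cat p q \<in> dX)"

definition reparam_step :: "(real \<Rightarrow> 'a) \<Rightarrow> (real \<Rightarrow> 'a) \<Rightarrow> bool" where
  "reparam_step p q \<longleftrightarrow> (\<exists>\<phi>. mono_reparam \<phi> \<and> \<phi> ` {0..1} = {0..1} \<and>
                              (\<forall>t\<in>{0..1}. q t = p (\<phi> t)))"

definition trace_eq :: "(real \<Rightarrow> 'a) set \<Rightarrow> (real \<Rightarrow> 'a) \<Rightarrow> (real \<Rightarrow> 'a) \<Rightarrow> bool" where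
  "trace_eq dX = equivclp (\<lambda>p q. p \<in> dX \<and> q \<in> dX \<and> reparam_step p q)"

definition traces :: "(real \<Rightarrow> 'a) set \<Rightarrow> (real \<Rightarrow> 'a) set set" where
  "traces dX = dX // {(p, q). p \<in> dX \<and> q \<in> dX \<and> trace_eq dX p q}"

definition trace_src :: "(real \<Rightarrow> 'a) set \<Rightarrow> 'a" where
  "trace_src F = (SOME p. p \<in> F) 0"

definition trace_tgt :: "(real \<Rightarrow> 'a) set \<Rightarrow> 'a" where
  "trace_tgt F = (SOME p. p \<in> F) 1"

definition trace_cat :: "(real \<Rightarrow> 'a) set \<Rightarrow> (real \<Rightarrow> 'a) set \<Rightarrow> (real \<Rightarrow> 'a) set \<Rightarrow> (real \<Rightarrow> 'a) set" where
  "trace_cat dX F G = {r \<in> dX. \<exists>p\<in>F. \<exists>q\<in>G. p 1 = q 0 \<and> trace_eq dX r (dpath_cat p q)}"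

definition trace_le :: "(real \<Rightarrow> 'a) set \<Rightarrow> (real \<Rightarrow> 'a) set rel" where
  "trace_le dX = {(F, G). F \<in> traces dX \<and> G \<in> traces dX \<and>
      (\<exists>U\<in>traces dX. \<exists>V\<in>traces dX.
         trace_tgt U = trace_src F \<and> trace_tgt F = trace_src V \<and>
         G = trace_cat dX (trace_cat dX U F) V)}"

definition pospace :: "'a topology \<Rightarrow> ('a \<Rightarrow> 'a \<Rightarrow> bool) \<Rightarrow> bool" where
  "pospace X le \<longleftrightarrow> Hausdorff_space X \<and>
     (\<forall>x\<in>topspace X. le x x) \<and>
     (\<forall>x\<in>topspace X. \<forall>y\<in>topspace X. \<forall>z\<in>topspace X. le x y \<longrightarrow> le y z \<longrightarrow> le x z) \<and>
     (\<forall>x\<in>topspace X. \<forall>y\<in>topspace X. le x y \<longrightarrow> le y x \<longrightarrow> x = y) \<and>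
     closedin (prod_topology X X) {(x, y). x \<in> topspace X \<and> y \<in> topspace X \<and> le x y}"

definition pospace_dipaths :: "'a topology \<Rightarrow> ('a \<Rightarrow> 'a \<Rightarrow> bool) \<Rightarrow> (real \<Rightarrow> 'a) set" where
  "pospace_dipaths X le = {p. is_path X p \<and>
     (\<forall>s t. 0 \<le> s \<longrightarrow> s \<le> t \<longrightarrow> t \<le> 1 \<longrightarrow> le (p s) (p t))}"

end

theory Submission
  imports Defs
begin

text \<open>Traces form a category under concatenation. Concatenation is well defined on traces
  because reparametrizing one factor of a concatenated dipath reparametrizes the whole
  dipath; it is associative because the two bracketings differ by a piecewise linear
  reparametrization; and constant traces are units, because a constant piece can be
  absorbed by reparametrization. Reflexivity and transitivity of the relation then follow
  from these category laws alone.

  In a pospace every dipath is increasing, so the source of a trace lies below its target.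
  If f \<le> g \<le> f, with g = u \<star> f \<star> v, then following the endpoints around shows that the
  target of u lies below its source, and likewise for v. An increasing path whose endpoints
  coincide is constant, so u and v are units and g = f.\<close>

lemma mono_reparam_surj_ends:
  assumes "mono_reparam \<phi>" "\<phi> ` {0..1} = {0..1}"
  shows "\<phi> 0 = 0" "\<phi> 1 = 1"
proof -
  have mono: "mono_on {0..1} \<phi>" using assms(1) unfolding mono_reparam_def by auto
  obtain s where s: "s \<in> {0..1}" "\<phi> s = 0"
    using assms(2) by (metis atLeastAtMost_iff imageE order_refl zero_le_one)
  obtain s' where s': "s' \<in> {0..1}" "\<phi> s' = 1"
    using assms(2) by (metis atLeastAtMost_iff imageE order_refl zero_le_one)
  have "\<phi> 0 \<le> \<phi> s" "\<phi> s' \<le> \<phi> 1" using mono s(1) s'(1) by (auto intro: mono_onD)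
  moreover have "\<phi> 0 \<in> {0..1}" "\<phi> 1 \<in> {0..1}" using assms(2) by auto
  ultimately show "\<phi> 0 = 0" "\<phi> 1 = 1" using s s' by auto
qed

lemma reparam_step_ends:
  assumes "reparam_step p q"
  shows "q 0 = p 0" "q 1 = p 1"
proof -
  obtain \<phi> where \<phi>: "mono_reparam \<phi>" "\<phi> ` {0..1} = {0..1}" "\<forall>t\<in>{0..1}. q t = p (\<phi> t)"
    using assms unfolding reparam_step_def by blast
  then show "q 0 = p 0" "q 1 = p 1"
    using mono_reparam_surj_ends[OF \<phi>(1,2)] by auto
qed

text \<open>Surjectivity onto [0,1] follows from the end conditions by the intermediate value theorem.\<close>

lemma reparam_stepI:
  fixes \<psi> :: "real \<Rightarrow> real"
  assumes "continuous_on {0..1} \<psi>" "\<psi> ` {0..1} \<subseteq> {0..1}" "mono_on {0..1} \<psi>"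
    and "\<psi> 0 = 0" "\<psi> 1 = 1"
    and "\<And>t. t \<in> {0..1} \<Longrightarrow> q t = p (\<psi> t)"
  shows "reparam_step p q"
proof -
  have "{0..1} \<subseteq> \<psi> ` {0..1}"
  proof
    fix y :: real
    assume "y \<in> {0..1}"
    then obtain x where "0 \<le> x" "x \<le> 1" "\<psi> x = y"
      using IVT'[of \<psi> 0 y 1] assms by auto
    then show "y \<in> \<psi> ` {0..1}" by force
  qed
  then show ?thesis
    unfolding reparam_step_def mono_reparam_def using assms by blast
qed

lemma reparam_step_eq_on:
  assumes "\<forall>t\<in>{0..1}. q t = p t"
  shows "reparam_step p q"
  using assms by (intro reparam_stepI[where \<psi> = id]) (auto intro: mono_onI)

lemma reparam_step_cat_left:
  assumes "reparam_step p p'"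
  shows "reparam_step (dpath_cat p q) (dpath_cat p' q)"
proof -
  obtain \<phi> where \<phi>: "mono_reparam \<phi>" "\<phi> ` {0..1} = {0..1}" "\<forall>t\<in>{0..1}. p' t = p (\<phi> t)"
    using assms unfolding reparam_step_def by auto
  have ends: "\<phi> 0 = 0" "\<phi> 1 = 1" using mono_reparam_surj_ends[OF \<phi>(1,2)] by auto
  have cont: "continuous_on {0..1} \<phi>" and mono: "mono_on {0..1} \<phi>"
    using \<phi>(1) unfolding mono_reparam_def by auto
  have range: "0 \<le> \<phi> x \<and> \<phi> x \<le> 1" if "0 \<le> x" "x \<le> 1" for x
    using \<phi>(2) that by (metis atLeastAtMost_iff image_eqI)
  define \<psi> where "\<psi> = (\<lambda>t::real. \<phi> (min 1 (2 * t)) / 2 + max 0 (t - 1/2))"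
  show ?thesis
  proof (rule reparam_stepI[where \<psi> = \<psi>])
    have "continuous_on {0..1} (\<lambda>t::real. \<phi> (min 1 (2 * t)))"
      by (rule continuous_on_compose2[OF cont]) (auto intro!: continuous_intros)
    then show "continuous_on {0..1} \<psi>" unfolding \<psi>_def by (intro continuous_intros) auto
    show "\<psi> ` {0..1} \<subseteq> {0..1}"
    proof (rule image_subsetI)
      fix t :: real
      assume t: "t \<in> {0..1}"
      have "0 \<le> \<phi> (min 1 (2 * t)) \<and> \<phi> (min 1 (2 * t)) \<le> 1" using t by (intro range) auto
      then show "\<psi> t \<in> {0..1}"
        using t ends unfolding \<psi>_def by (cases "t \<le> 1/2") auto
    qed
    show "mono_on {0..1} \<psi>"
    proof (rule mono_onI)
      fix r s :: real
      assume "r \<in> {0..1}" "s \<in> {0..1}" "r \<le> s"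
      then have "\<phi> (min 1 (2 * r)) \<le> \<phi> (min 1 (2 * s))" by (intro mono_onD[OF mono]) auto
      then show "\<psi> r \<le> \<psi> s" using \<open>r \<le> s\<close> unfolding \<psi>_def by simp
    qed
    show "\<psi> 0 = 0" "\<psi> 1 = 1" unfolding \<psi>_def using ends by simp_all
    fix t :: real
    assume t: "t \<in> {0..1}"
    show "dpath_cat p' q t = dpath_cat p q (\<psi> t)"
    proof (cases "t \<le> 1/2")
      case True
      then have "0 \<le> \<phi> (2 * t) \<and> \<phi> (2 * t) \<le> 1" "p' (2 * t) = p (\<phi> (2 * t))"
        using t range \<phi>(3) by auto
      then show ?thesis using True unfolding dpath_cat_def \<psi>_def by simp
    next
      case False
      then show ?thesis using ends unfolding dpath_cat_def \<psi>_def by simp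
    qed
  qed
qed

lemma reparam_step_cat_right:
  assumes "reparam_step q q'" "p 1 = q 0"
  shows "reparam_step (dpath_cat p q) (dpath_cat p q')"
proof -
  obtain \<phi> where \<phi>: "mono_reparam \<phi>" "\<phi> ` {0..1} = {0..1}" "\<forall>t\<in>{0..1}. q' t = q (\<phi> t)"
    using assms unfolding reparam_step_def by auto
  have ends: "\<phi> 0 = 0" "\<phi> 1 = 1" using mono_reparam_surj_ends[OF \<phi>(1,2)] by auto
  have cont: "continuous_on {0..1} \<phi>" and mono: "mono_on {0..1} \<phi>"
    using \<phi>(1) unfolding mono_reparam_def by auto
  define \<psi> where "\<psi> = (\<lambda>t::real. min t (1/2) + \<phi> (max 0 (2 * t - 1)) / 2)"
  show ?thesis
  proof (rule reparam_stepI[where \<psi> = \<psi>])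
    have "continuous_on {0..1} (\<lambda>t::real. \<phi> (max 0 (2 * t - 1)))"
      by (rule continuous_on_compose2[OF cont]) (auto intro!: continuous_intros)
    then show "continuous_on {0..1} \<psi>" unfolding \<psi>_def by (auto intro!: continuous_intros)
    show "\<psi> ` {0..1} \<subseteq> {0..1}"
    proof (rule image_subsetI)
      fix t :: real
      assume t: "t \<in> {0..1}"
      have "\<phi> (max 0 (2 * t - 1)) \<in> {0..1}" using \<phi>(2) t by auto
      moreover have "t \<le> 1/2 \<Longrightarrow> \<phi> (max 0 (2 * t - 1)) = 0" using ends by auto
      ultimately show "\<psi> t \<in> {0..1}" using t unfolding \<psi>_def by (auto simp: min_def)
    qed
    show "mono_on {0..1} \<psi>"
    proof (rule mono_onI)
      fix r s :: real
      assume rs: "r \<in> {0..1}" "s \<in> {0..1}" "r \<le> s"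
      then have "\<phi> (max 0 (2 * r - 1)) \<le> \<phi> (max 0 (2 * s - 1))" by (intro mono_onD[OF mono]) auto
      then show "\<psi> r \<le> \<psi> s" unfolding \<psi>_def using rs by (auto simp: min_def)
    qed
    show "\<psi> 0 = 0" "\<psi> 1 = 1" unfolding \<psi>_def using ends by auto
    fix t :: real
    assume t: "t \<in> {0..1}"
    show "dpath_cat p q' t = dpath_cat p q (\<psi> t)"
    proof (cases "t \<le> 1/2")
      case True
      then show ?thesis using ends t unfolding \<psi>_def dpath_cat_def by auto
    next
      case False
      have "\<phi> (2 * t - 1) \<in> {0..1}" using \<phi>(2) t False by auto
      then show ?thesis using False t \<phi>(3) ends assms(2) unfolding \<psi>_def dpath_cat_def by auto
    qed
  qed
qed

lemma reparam_step_const_cat: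
  assumes "\<forall>t\<in>{0..1}. c t = q 0"
  shows "reparam_step q (dpath_cat c q)"
proof (rule reparam_stepI[where \<psi> = "\<lambda>t. max 0 (2 * t - 1)"])
  show "continuous_on {0..1} (\<lambda>t::real. max 0 (2 * t - 1))" by (intro continuous_intros)
  show "mono_on {0..1} (\<lambda>t::real. max 0 (2 * t - 1))" by (rule mono_onI) auto
  fix t :: real
  assume "t \<in> {0..1}"
  then show "dpath_cat c q t = q (max 0 (2 * t - 1))"
  proof (cases "t \<le> 1/2")
    case True
    then have "max 0 (2 * t - 1) = 0" by simp
    then show ?thesis using True assms \<open>t \<in> {0..1}\<close> unfolding dpath_cat_def by simp
  qed (simp add: dpath_cat_def)
qed auto

lemma reparam_step_cat_const:
  assumes "\<forall>t\<in>{0..1}. c t = p 1"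
  shows "reparam_step p (dpath_cat p c)"
proof (rule reparam_stepI[where \<psi> = "\<lambda>t. min 1 (2 * t)"])
  show "continuous_on {0..1} (\<lambda>t::real. min 1 (2 * t))" by (intro continuous_intros)
  show "mono_on {0..1} (\<lambda>t::real. min 1 (2 * t))" by (rule mono_onI) auto
  fix t :: real
  assume "t \<in> {0..1}"
  then show "dpath_cat p c t = p (min 1 (2 * t))"
  proof (cases "t \<le> 1/2")
    case False
    then have "min 1 (2 * t) = 1" by simp
    then show ?thesis using False assms \<open>t \<in> {0..1}\<close> unfolding dpath_cat_def by simp
  qed (simp add: dpath_cat_def)
qed auto

text \<open>The reparametrization is piecewise linear with breakpoints 1/4 and 1/2, mapping the
  pieces [0,1/4], [1/4,1/2], [1/2,1] of the left-bracketed concatenation onto the pieces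
  [0,1/2], [1/2,3/4], [3/4,1] of the right-bracketed one.\<close>

lemma reparam_step_cat_assoc:
  "reparam_step (dpath_cat p (dpath_cat q r)) (dpath_cat (dpath_cat p q) r)"
proof (rule reparam_stepI[where \<psi> = "\<lambda>t. min (2 * t) (min (t + 1/4) ((t + 1) / 2))"])
  show "continuous_on {0..1} (\<lambda>t::real. min (2 * t) (min (t + 1/4) ((t + 1) / 2)))"
    by (intro continuous_intros) auto
  show "(\<lambda>t::real. min (2 * t) (min (t + 1/4) ((t + 1) / 2))) ` {0..1} \<subseteq> {0..1}"
    by (auto simp: min_def)
  show "mono_on {0..1} (\<lambda>t::real. min (2 * t) (min (t + 1/4) ((t + 1) / 2)))"
    by (rule mono_onI) (auto simp: min_def)
  fix t :: real
  consider "t \<le> 1/4" | "1/4 < t" "t \<le> 1/2" | "1/2 < t" by linarith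
  then show "dpath_cat (dpath_cat p q) r t
      = dpath_cat p (dpath_cat q r) (min (2 * t) (min (t + 1/4) ((t + 1) / 2)))"
  proof cases
    case 3
    then have "min (2 * t) (min (t + 1/4) ((t + 1) / 2)) = (t + 1) / 2"
      and "2 * (2 * ((t + 1) / 2) - 1) - 1 = 2 * t - 1" by (simp_all add: field_simps)
    then show ?thesis using 3 unfolding dpath_cat_def by (simp only:) simp
  qed (auto simp: dpath_cat_def min_def algebra_simps)
qed auto

lemma trace_eq_refl: "trace_eq dX p p"
  unfolding trace_eq_def by simp

lemma trace_eq_sym: "trace_eq dX p q \<Longrightarrow> trace_eq dX q p"
  unfolding trace_eq_def by (rule equivclp_sym)

lemma trace_eq_trans: "trace_eq dX p q \<Longrightarrow> trace_eq dX q r \<Longrightarrow> trace_eq dX p r"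
  unfolding trace_eq_def by (rule equivclp_trans)

lemma trace_eq_stepI: "p \<in> dX \<Longrightarrow> q \<in> dX \<Longrightarrow> reparam_step p q \<Longrightarrow> trace_eq dX p q"
  unfolding trace_eq_def by auto

lemma trace_eq_ends:
  assumes "trace_eq dX p q"
  shows "q 0 = p 0" "q 1 = p 1"
  using assms unfolding trace_eq_def
  by (induction rule: equivclp_induct) (auto dest: reparam_step_ends)

text \<open>The predicate P carries a side condition (such as composability) that
  reparametrization steps preserve.\<close>

lemma trace_eq_map:
  assumes "trace_eq dX p p'" "P p"
    and P_step: "\<And>q q'. reparam_step q q' \<Longrightarrow> P q \<longleftrightarrow> P q'"
    and h_step: "\<And>q q'. q \<in> dX \<Longrightarrow> q' \<in> dX \<Longrightarrow> reparam_step q q' \<Longrightarrow> P q \<Longrightarrow> P q'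
                   \<Longrightarrow> trace_eq dY (h q) (h q')"
  shows "trace_eq dY (h p) (h p')"
proof -
  have "equivclp (\<lambda>p q. p \<in> dX \<and> q \<in> dX \<and> reparam_step p q) p p'"
    using assms(1) unfolding trace_eq_def .
  then have "P p' \<and> trace_eq dY (h p) (h p')"
  proof (induction rule: equivclp_induct)
    case base
    show ?case using \<open>P p\<close> by (simp add: trace_eq_refl)
  next
    case (step q q')
    then consider "q \<in> dX" "q' \<in> dX" "reparam_step q q'" | "q' \<in> dX" "q \<in> dX" "reparam_step q' q"
      by (auto simp: symclp_def)
    then show ?case
    proof cases
      case 1
      then show ?thesis using step.IH P_step h_step by (metis trace_eq_trans)
    next
      case 2
      then show ?thesis using step.IH P_step h_step by (metis trace_eq_trans trace_eq_sym)
    qed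
  qed
  then show ?thesis ..
qed

lemma dspace_dpath_cat:
  "dspace X dX \<Longrightarrow> p \<in> dX \<Longrightarrow> q \<in> dX \<Longrightarrow> p 1 = q 0 \<Longrightarrow> dpath_cat p q \<in> dX"
  unfolding dspace_def by blast

lemma dspace_const:
  "dspace X dX \<Longrightarrow> x \<in> topspace X \<Longrightarrow> (\<lambda>t. x) \<in> dX"
  unfolding dspace_def by blast

lemma dspace_dipath_in_topspace:
  assumes "dspace X dX" "p \<in> dX" "t \<in> {0..1}"
  shows "p t \<in> topspace X"
proof -
  have "p \<in> {0..1} \<rightarrow> topspace X"
    using assms(1,2) unfolding dspace_def is_path_def continuous_map_def by auto
  then show ?thesis using assms(3) by blast
qed

lemma dpath_cat_ends [simp]: "dpath_cat p q 0 = p 0" "dpath_cat p q 1 = q 1"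
  unfolding dpath_cat_def by auto

definition trace_of :: "(real \<Rightarrow> 'a) set \<Rightarrow> (real \<Rightarrow> 'a) \<Rightarrow> (real \<Rightarrow> 'a) set" where
  "trace_of dX p = {q \<in> dX. trace_eq dX p q}"

lemma traces_eq_image_trace_of: "traces dX = trace_of dX ` dX"
  unfolding traces_def quotient_def trace_of_def by auto

lemma trace_of_in_traces: "p \<in> dX \<Longrightarrow> trace_of dX p \<in> traces dX"
  by (simp add: traces_eq_image_trace_of)

lemma tracesE:
  assumes "F \<in> traces dX"
  obtains p where "p \<in> dX" "F = trace_of dX p"
  using assms by (auto simp: traces_eq_image_trace_of)

lemma trace_of_eq_iff:
  "p \<in> dX \<Longrightarrow> q \<in> dX \<Longrightarrow> trace_of dX p = trace_of dX q \<longleftrightarrow> trace_eq dX p q"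
proof
  assume "p \<in> dX" "q \<in> dX" "trace_of dX p = trace_of dX q"
  then show "trace_eq dX p q"
    using trace_eq_refl[of dX q] unfolding trace_of_def by blast
next
  assume "trace_eq dX p q"
  then have "trace_eq dX p r \<longleftrightarrow> trace_eq dX q r" for r
    by (metis trace_eq_sym trace_eq_trans)
  then show "trace_of dX p = trace_of dX q"
    unfolding trace_of_def by simp
qed

lemma trace_of_eq_if_reparam_step:
  "p \<in> dX \<Longrightarrow> q \<in> dX \<Longrightarrow> reparam_step p q \<Longrightarrow> trace_of dX q = trace_of dX p"
  by (metis trace_of_eq_iff trace_eq_stepI)

lemma trace_of_ends:
  assumes "p \<in> dX"
  shows trace_src_trace_of: "trace_src (trace_of dX p) = p 0"
    and trace_tgt_trace_of: "trace_tgt (trace_of dX p) = p 1"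
proof -
  define r where "r = (SOME r. r \<in> trace_of dX p)"
  have "p \<in> trace_of dX p"
    using assms by (simp add: trace_of_def trace_eq_refl)
  then have "r \<in> trace_of dX p"
    unfolding r_def by (rule someI[of "\<lambda>r. r \<in> trace_of dX p"])
  then have "trace_eq dX p r" by (simp add: trace_of_def)
  from trace_eq_ends[OF this]
  show "trace_src (trace_of dX p) = p 0" "trace_tgt (trace_of dX p) = p 1"
    unfolding trace_src_def trace_tgt_def r_def[symmetric] by simp_all
qed

context
  fixes X :: "'a topology" and dX :: "(real \<Rightarrow> 'a) set"
  assumes dspace: "dspace X dX"
begin

lemma trace_eq_dpath_cat_left:
  assumes "trace_eq dX p p'" "q \<in> dX" "p 1 = q 0"
  shows "trace_eq dX (dpath_cat p q) (dpath_cat p' q)"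
  using assms(1,3)
proof (rule trace_eq_map)
  show "r 1 = q 0 \<longleftrightarrow> r' 1 = q 0" if "reparam_step r r'" for r r'
    using reparam_step_ends[OF that] by simp
  show "trace_eq dX (dpath_cat r q) (dpath_cat r' q)"
    if "r \<in> dX" "r' \<in> dX" "reparam_step r r'" "r 1 = q 0" "r' 1 = q 0" for r r'
    using that assms(2) by (intro trace_eq_stepI dspace_dpath_cat[OF dspace] reparam_step_cat_left)
qed

lemma trace_eq_dpath_cat_right:
  assumes "trace_eq dX q q'" "p \<in> dX" "p 1 = q 0"
  shows "trace_eq dX (dpath_cat p q) (dpath_cat p q')"
  using assms(1,3)
proof (rule trace_eq_map)
  show "p 1 = r 0 \<longleftrightarrow> p 1 = r' 0" if "reparam_step r r'" for r r'
    using reparam_step_ends[OF that] by simp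
  show "trace_eq dX (dpath_cat p r) (dpath_cat p r')"
    if "r \<in> dX" "r' \<in> dX" "reparam_step r r'" "p 1 = r 0" "p 1 = r' 0" for r r'
    using that assms(2) by (intro trace_eq_stepI dspace_dpath_cat[OF dspace] reparam_step_cat_right)
qed

lemma trace_cat_trace_of:
  assumes p: "p \<in> dX" and q: "q \<in> dX" and pq: "p 1 = q 0"
  shows "trace_cat dX (trace_of dX p) (trace_of dX q) = trace_of dX (dpath_cat p q)"
proof
  show "trace_cat dX (trace_of dX p) (trace_of dX q) \<subseteq> trace_of dX (dpath_cat p q)"
  proof
    fix r
    assume "r \<in> trace_cat dX (trace_of dX p) (trace_of dX q)"
    then obtain p' q' where r: "r \<in> dX" "trace_eq dX r (dpath_cat p' q')"
      and p': "p' \<in> dX" "trace_eq dX p p'" and q': "trace_eq dX q q'" and "p' 1 = q' 0"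
      unfolding trace_cat_def trace_of_def by blast
    have "trace_eq dX (dpath_cat p q) (dpath_cat p' q)"
      using trace_eq_dpath_cat_left[OF p'(2) q pq] .
    moreover have "trace_eq dX (dpath_cat p' q) (dpath_cat p' q')"
      using trace_eq_dpath_cat_right[OF q' p'(1)] trace_eq_ends(2)[OF p'(2)] pq by simp
    ultimately have "trace_eq dX (dpath_cat p q) r"
      using r(2) by (meson trace_eq_sym trace_eq_trans)
    then show "r \<in> trace_of dX (dpath_cat p q)"
      using r(1) unfolding trace_of_def by simp
  qed
  show "trace_of dX (dpath_cat p q) \<subseteq> trace_cat dX (trace_of dX p) (trace_of dX q)"
  proof
    fix r
    assume "r \<in> trace_of dX (dpath_cat p q)"
    then have "r \<in> dX" "trace_eq dX r (dpath_cat p q)"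
      unfolding trace_of_def by (simp_all add: trace_eq_sym)
    then show "r \<in> trace_cat dX (trace_of dX p) (trace_of dX q)"
      using p q pq trace_eq_refl unfolding trace_cat_def trace_of_def by blast
  qed
qed

lemma trace_ends_in_topspace:
  assumes "F \<in> traces dX"
  shows "trace_src F \<in> topspace X" "trace_tgt F \<in> topspace X"
  using assms by (auto elim!: tracesE simp: trace_of_ends dspace_dipath_in_topspace[OF dspace])

lemma trace_cat_traces:
  assumes "F \<in> traces dX" "G \<in> traces dX" "trace_tgt F = trace_src G"
  shows trace_cat_in_traces: "trace_cat dX F G \<in> traces dX"
    and trace_src_trace_cat: "trace_src (trace_cat dX F G) = trace_src F"
    and trace_tgt_trace_cat: "trace_tgt (trace_cat dX F G) = trace_tgt G"
proof -
  obtain p q where "p \<in> dX" "q \<in> dX" "F = trace_of dX p" "G = trace_of dX q"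
    using assms(1,2) by (auto elim!: tracesE)
  moreover have "p 1 = q 0" using assms(3) calculation by (simp add: trace_of_ends)
  ultimately show "trace_cat dX F G \<in> traces dX" "trace_src (trace_cat dX F G) = trace_src F"
    "trace_tgt (trace_cat dX F G) = trace_tgt G"
    by (simp_all add: trace_cat_trace_of trace_of_ends trace_of_in_traces dspace_dpath_cat[OF dspace])
qed

lemma trace_cat_assoc:
  assumes "F \<in> traces dX" "G \<in> traces dX" "H \<in> traces dX"
    and "trace_tgt F = trace_src G" "trace_tgt G = trace_src H"
  shows "trace_cat dX (trace_cat dX F G) H = trace_cat dX F (trace_cat dX G H)"
proof -
  obtain p q r where pqr: "p \<in> dX" "q \<in> dX" "r \<in> dX"
    and FGH: "F = trace_of dX p" "G = trace_of dX q" "H = trace_of dX r"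
    using assms(1-3) by (auto elim!: tracesE)
  moreover have ends: "p 1 = q 0" "q 1 = r 0" using assms(4,5) pqr FGH by (simp_all add: trace_of_ends)
  moreover have "dpath_cat p q \<in> dX" "dpath_cat q r \<in> dX"
    using pqr ends by (simp_all add: dspace_dpath_cat[OF dspace])
  moreover have "trace_of dX (dpath_cat (dpath_cat p q) r) = trace_of dX (dpath_cat p (dpath_cat q r))"
    using calculation
    by (intro trace_of_eq_if_reparam_step reparam_step_cat_assoc) (simp_all add: dspace_dpath_cat[OF dspace])
  ultimately show ?thesis
    by (simp add: trace_cat_trace_of)
qed

lemma trace_cat_const_left:
  assumes "F \<in> traces dX"
  shows "trace_cat dX (trace_of dX (\<lambda>t. trace_src F)) F = F"
proof -
  obtain p where p: "p \<in> dX" "F = trace_of dX p" using assms by (auto elim!: tracesE)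
  have c: "(\<lambda>t. p 0) \<in> dX"
    using p(1) by (simp add: dspace_const[OF dspace] dspace_dipath_in_topspace[OF dspace])
  have "trace_of dX (dpath_cat (\<lambda>t. p 0) p) = trace_of dX p"
    using p(1) c by (intro trace_of_eq_if_reparam_step reparam_step_const_cat dspace_dpath_cat[OF dspace]) simp_all
  then show ?thesis
    using p c by (simp add: trace_of_ends trace_cat_trace_of)
qed

lemma trace_cat_const_right:
  assumes "F \<in> traces dX"
  shows "trace_cat dX F (trace_of dX (\<lambda>t. trace_tgt F)) = F"
proof -
  obtain p where p: "p \<in> dX" "F = trace_of dX p" using assms by (auto elim!: tracesE)
  have c: "(\<lambda>t. p 1) \<in> dX"
    using p(1) by (simp add: dspace_const[OF dspace] dspace_dipath_in_topspace[OF dspace])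
  have "trace_of dX (dpath_cat p (\<lambda>t. p 1)) = trace_of dX p"
    using p(1) c by (intro trace_of_eq_if_reparam_step reparam_step_cat_const dspace_dpath_cat[OF dspace]) simp_all
  then show ?thesis
    using p c by (simp add: trace_of_ends trace_cat_trace_of)
qed

lemmas trace_cat_simps =
  trace_cat_in_traces trace_src_trace_cat trace_tgt_trace_cat trace_cat_assoc

lemma trace_le_refl:
  assumes "F \<in> traces dX"
  shows "(F, F) \<in> trace_le dX"
proof -
  let ?U = "trace_of dX (\<lambda>t. trace_src F)" and ?V = "trace_of dX (\<lambda>t. trace_tgt F)"
  have "(\<lambda>t. trace_src F) \<in> dX" "(\<lambda>t. trace_tgt F) \<in> dX"
    using assms by (simp_all add: dspace_const[OF dspace] trace_ends_in_topspace)
  then have "?U \<in> traces dX" "?V \<in> traces dX" "trace_tgt ?U = trace_src F" "trace_tgt F = trace_src ?V"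
    by (simp_all add: trace_of_in_traces trace_of_ends)
  moreover have "F = trace_cat dX (trace_cat dX ?U F) ?V"
    using assms by (simp add: trace_cat_const_left trace_cat_const_right)
  ultimately show ?thesis
    unfolding trace_le_def using assms by blast
qed

lemma trans_trace_le: "trans (trace_le dX)"
proof (rule transI)
  fix F G H
  assume "(F, G) \<in> trace_le dX" "(G, H) \<in> trace_le dX"
  then obtain U V U' V' where F: "F \<in> traces dX"
    and UV: "U \<in> traces dX" "V \<in> traces dX" "trace_tgt U = trace_src F" "trace_tgt F = trace_src V"
    and G: "G = trace_cat dX (trace_cat dX U F) V"
    and U'V': "U' \<in> traces dX" "V' \<in> traces dX" "trace_tgt U' = trace_src G" "trace_tgt G = trace_src V'"
    and H: "H = trace_cat dX (trace_cat dX U' G) V'"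
    unfolding trace_le_def by blast
  have ends: "trace_tgt U' = trace_src U" "trace_tgt V = trace_src V'"
    using UV U'V' F by (simp_all add: G trace_cat_simps)
  have "H = trace_cat dX (trace_cat dX (trace_cat dX U' U) F) (trace_cat dX V V')" "H \<in> traces dX"
    using F UV U'V' ends by (simp_all add: H G trace_cat_simps)
  moreover have "trace_cat dX U' U \<in> traces dX" "trace_cat dX V V' \<in> traces dX"
    "trace_tgt (trace_cat dX U' U) = trace_src F" "trace_tgt F = trace_src (trace_cat dX V V')"
    using UV U'V' ends by (simp_all add: trace_cat_simps)
  ultimately show "(F, H) \<in> trace_le dX"
    unfolding trace_le_def using F by blast
qed

lemma preorder_on_trace_le: "preorder_on (traces dX) (trace_le dX)"
  unfolding preorder_on_def refl_on_def
  using trace_le_refl trans_trace_le by (auto simp: trace_le_def)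

end

lemma is_path_dpath_cat:
  assumes "is_path X p" "is_path X q" "p 1 = q 0"
  shows "is_path X (dpath_cat p q)"
proof -
  let ?I = "top_of_set {0..1::real}"
  have "dpath_cat p q = (\<lambda>t. if t \<le> 1/2 then (p \<circ> (\<lambda>t. 2 * t)) t else (q \<circ> (\<lambda>t. 2 * t - 1)) t)"
    unfolding dpath_cat_def by auto
  moreover have "continuous_map ?I X
      (\<lambda>t. if t \<le> 1/2 then (p \<circ> (\<lambda>t. 2 * t)) t else (q \<circ> (\<lambda>t. 2 * t - 1)) t)"
  proof (intro continuous_map_cases_le continuous_map_compose)
    show "continuous_map (subtopology ?I {t \<in> topspace ?I. t \<le> 1/2}) ?I (\<lambda>t. 2 * t)"
      by (auto simp: continuous_map_in_subtopology continuous_map_from_subtopology)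
    have "continuous_map (subtopology ?I {t. 0 \<le> t \<and> t \<le> 1 \<and> 1 \<le> t * 2}) euclideanreal
        (\<lambda>t. 2 * t - 1)"
      by (intro continuous_intros) (force intro: continuous_map_from_subtopology)
    then show "continuous_map (subtopology ?I {t \<in> topspace ?I. 1/2 \<le> t}) ?I (\<lambda>t. 2 * t - 1)"
      by (force simp: continuous_map_in_subtopology)
    show "(p \<circ> (\<lambda>t. 2 * t)) t = (q \<circ> (\<lambda>t. 2 * t - 1)) t" if "t = 1/2" for t
    proof -
      have "2 * t = 1" using that by simp
      then show ?thesis using assms(3) by simp
    qed
  qed (use assms(1,2) in \<open>auto simp: is_path_def\<close>)
  ultimately show ?thesis unfolding is_path_def by simp
qed

context
  fixes X :: "'a topology" and le :: "'a \<Rightarrow> 'a \<Rightarrow> bool"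
  assumes pospace: "pospace X le"
begin

lemma pospace_refl: "x \<in> topspace X \<Longrightarrow> le x x"
  using pospace unfolding pospace_def by blast

lemma pospace_trans:
  "x \<in> topspace X \<Longrightarrow> y \<in> topspace X \<Longrightarrow> z \<in> topspace X \<Longrightarrow> le x y \<Longrightarrow> le y z \<Longrightarrow> le x z"
  using pospace unfolding pospace_def by blast

lemma pospace_antisym: "x \<in> topspace X \<Longrightarrow> y \<in> topspace X \<Longrightarrow> le x y \<Longrightarrow> le y x \<Longrightarrow> x = y"
  using pospace unfolding pospace_def by blast

lemma pospace_dipaths_comp_reparam:
  assumes "p \<in> pospace_dipaths X le" "mono_reparam \<phi>"
  shows "p \<circ> \<phi> \<in> pospace_dipaths X le"
proof -
  have \<phi>: "continuous_on {0..1} \<phi>" "\<phi> ` {0..1} \<subseteq> {0..1}" "mono_on {0..1} \<phi>"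
    using assms(2) unfolding mono_reparam_def by auto
  have "continuous_map (top_of_set {0..1}) (top_of_set {0..1}) \<phi>"
    using \<phi> by (auto simp: continuous_map_in_subtopology)
  moreover have "continuous_map (top_of_set {0..1}) X p"
    using assms(1) unfolding pospace_dipaths_def is_path_def by blast
  ultimately have "is_path X (p \<circ> \<phi>)"
    unfolding is_path_def by (rule continuous_map_compose)
  moreover have "le (p (\<phi> s)) (p (\<phi> t))" if "0 \<le> s" "s \<le> t" "t \<le> 1" for s t
  proof -
    have "\<phi> s \<le> \<phi> t" using that by (intro mono_onD[OF \<phi>(3)]) auto
    moreover have "\<phi> s \<in> {0..1}" "\<phi> t \<in> {0..1}" using that \<phi>(2) by (auto simp: image_subset_iff)
    ultimately show ?thesis using assms(1) unfolding pospace_dipaths_def by auto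
  qed
  ultimately show ?thesis unfolding pospace_dipaths_def by auto
qed

lemma pospace_dipaths_dpath_cat:
  assumes p: "p \<in> pospace_dipaths X le" and q: "q \<in> pospace_dipaths X le" and pq: "p 1 = q 0"
  shows "dpath_cat p q \<in> pospace_dipaths X le"
proof -
  have mono_p: "le (p s) (p t)" and mono_q: "le (q s) (q t)" if "0 \<le> s" "s \<le> t" "t \<le> 1" for s t
    using p q that unfolding pospace_dipaths_def by auto
  have in_X: "p t \<in> topspace X" "q t \<in> topspace X" if "t \<in> {0..1}" for t
    using p q that unfolding pospace_dipaths_def is_path_def continuous_map_def by auto
  have "le (dpath_cat p q s) (dpath_cat p q t)" if st: "0 \<le> s" "s \<le> t" "t \<le> 1" for s t
  proof (cases "t \<le> 1/2")
    case True
    then show ?thesis using st mono_p[of "2 * s" "2 * t"] unfolding dpath_cat_def by auto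
  next
    case t: False
    show ?thesis
    proof (cases "s \<le> 1/2")
      case True
      have "le (p (2 * s)) (p 1)" "le (q 0) (q (2 * t - 1))"
        using st True t by (auto intro: mono_p mono_q)
      moreover have "p (2 * s) \<in> topspace X" "q 0 \<in> topspace X" "q (2 * t - 1) \<in> topspace X"
        using in_X st True t by auto
      ultimately have "le (p (2 * s)) (q (2 * t - 1))"
        using pospace_trans pq by metis
      then show ?thesis using True t unfolding dpath_cat_def by simp
    next
      case False
      then show ?thesis using st t mono_q[of "2 * s - 1" "2 * t - 1"] unfolding dpath_cat_def by auto
    qed
  qed
  moreover have "is_path X (dpath_cat p q)"
    using p q pq by (intro is_path_dpath_cat) (auto simp: pospace_dipaths_def)
  ultimately show ?thesis unfolding pospace_dipaths_def by auto
qed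

lemma dspace_pospace_dipaths: "dspace X (pospace_dipaths X le)"
  unfolding dspace_def
  using pospace_dipaths_comp_reparam pospace_dipaths_dpath_cat
  by (auto simp: pospace_dipaths_def is_path_def pospace_refl)

lemma pospace_trace_src_le_tgt:
  assumes "T \<in> traces (pospace_dipaths X le)"
  shows "le (trace_src T) (trace_tgt T)"
proof -
  obtain p where "p \<in> pospace_dipaths X le" "T = trace_of (pospace_dipaths X le) p"
    using assms by (rule tracesE)
  then show ?thesis by (simp add: trace_of_ends pospace_dipaths_def)
qed

lemma pospace_trace_eq_const:
  assumes "T \<in> traces (pospace_dipaths X le)" "le (trace_tgt T) (trace_src T)"
  shows "trace_tgt T = trace_src T" "T = trace_of (pospace_dipaths X le) (\<lambda>t. trace_src T)"
proof -
  obtain p where p: "p \<in> pospace_dipaths X le" "T = trace_of (pospace_dipaths X le) p"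
    using assms(1) by (rule tracesE)
  have mono: "le (p s) (p t)" if "0 \<le> s" "s \<le> t" "t \<le> 1" for s t
    using p(1) that unfolding pospace_dipaths_def by blast
  have in_X: "p t \<in> topspace X" if "t \<in> {0..1}" for t
    using p(1) that by (rule dspace_dipath_in_topspace[OF dspace_pospace_dipaths])
  have "le (p 1) (p 0)" using assms(2) p by (simp add: trace_of_ends)
  then have p_const: "p t = p 0" if "t \<in> {0..1}" for t
    using that in_X mono pospace_trans[of "p t" "p 1" "p 0"]
    by (intro pospace_antisym) auto
  show "trace_tgt T = trace_src T" using p p_const[of 1] by (simp add: trace_of_ends)
  have const: "(\<lambda>t. p 0) \<in> pospace_dipaths X le"
    using in_X by (simp add: dspace_const[OF dspace_pospace_dipaths])
  moreover have "reparam_step (\<lambda>t. p 0) p"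
    by (rule reparam_step_eq_on) (use p_const in blast)
  ultimately have "trace_of (pospace_dipaths X le) p = trace_of (pospace_dipaths X le) (\<lambda>t. p 0)"
    by (rule trace_of_eq_if_reparam_step[OF _ p(1)])
  then show "T = trace_of (pospace_dipaths X le) (\<lambda>t. trace_src T)"
    using p const by (simp add: trace_of_ends)
qed

lemma antisym_trace_le: "antisym (trace_le (pospace_dipaths X le))"
proof (rule antisymI)
  let ?dX = "pospace_dipaths X le"
  note dspace = dspace_pospace_dipaths
  fix F G
  assume "(F, G) \<in> trace_le ?dX" "(G, F) \<in> trace_le ?dX"
  then obtain U V U' V' where FG: "F \<in> traces ?dX" "G \<in> traces ?dX"
    and UV: "U \<in> traces ?dX" "V \<in> traces ?dX" "trace_tgt U = trace_src F" "trace_tgt F = trace_src V"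
    and G: "G = trace_cat ?dX (trace_cat ?dX U F) V"
    and U'V': "U' \<in> traces ?dX" "V' \<in> traces ?dX" "trace_tgt U' = trace_src G" "trace_tgt G = trace_src V'"
    and F: "F = trace_cat ?dX (trace_cat ?dX U' G) V'"
    unfolding trace_le_def by blast
  have "trace_src G = trace_src U" "trace_tgt G = trace_tgt V"
    using FG UV unfolding G by (simp_all add: trace_cat_simps[OF dspace])
  moreover have "trace_src F = trace_src U'" "trace_tgt F = trace_tgt V'"
    using FG U'V' unfolding F by (simp_all add: trace_cat_simps[OF dspace])
  ultimately have "le (trace_tgt U) (trace_src U)" "le (trace_tgt V) (trace_src V)"
    using pospace_trace_src_le_tgt[OF U'V'(1)] pospace_trace_src_le_tgt[OF U'V'(2)] UV U'V' by simp_all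
  then have "U = trace_of ?dX (\<lambda>t. trace_src F)" "V = trace_of ?dX (\<lambda>t. trace_tgt F)"
    using pospace_trace_eq_const UV by metis+
  then show "F = G"
    using FG by (simp add: G trace_cat_const_left[OF dspace] trace_cat_const_right[OF dspace])
qed

end

theorem lemma5p1:
  shows "(\<forall>(X :: 'a topology) dX. dspace X dX \<longrightarrow> preorder_on (traces dX) (trace_le dX))
       \<and> (\<forall>(X :: 'a topology) le. pospace X le \<longrightarrow>
            partial_order_on (traces (pospace_dipaths X le)) (trace_le (pospace_dipaths X le)))"
proof (intro conjI allI impI)
  fix X :: "'a topology" and dX
  assume "dspace X dX"
  then show "preorder_on (traces dX) (trace_le dX)"
    by (rule preorder_on_trace_le)
next
  fix X :: "'a topology" and le
  assume "pospace X le"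
  then show "partial_order_on (traces (pospace_dipaths X le)) (trace_le (pospace_dipaths X le))"
    unfolding partial_order_on_def
    using preorder_on_trace_le[OF dspace_pospace_dipaths] antisym_trace_le by blast
qed

end
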